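(* Let $H_n=\sum_{j=1}^n\frac1j$, let $\gamma$ be the Euler–Mascheroni constant, $\Gamma$ the gamma function and $G$ the Barnes $G$-function. For $x > 0$, $$\sum_{n = 1}^\infty (-1)^n n\left(H_n - \log(n + x - 1) - \gamma + \frac{x}{n} - \frac{3}{2n}\right) = \frac{\gamma }{4} - \frac{x -\log (2) - 1}{2} - 2 \log \left[\frac{G\left(\frac{x+1}{2}\right)}{G\left(\frac{x}{2}\right)}\right] + \log\Gamma \left(\frac{x}{2}\right).$$
   Context: The Barnes $G$-function is the entire function $G(z+1) = (2\pi)^{z/2} e^{-\frac{z+z^2(1+\gamma)}{2}} \prod_{m=1}^\infty \left(1+\frac{z}{m}\right)^m e^{-z+\frac{z^2}{2m}}$; it satisfies $G(1)=1$ and $G(z+1)=\Gamma(z)G(z)$. *)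

theory Defs
  imports "HOL-Analysis.Analysis"
begin

text \<open>Barnes G-function on the reals, via its Weierstrass product:
  G(z+1) = (2 pi)^(z/2) exp(-(z + z^2 (1+gamma))/2) prod_{m>=1} (1+z/m)^m exp(-z + z^2/(2m)).
  We set barnes_G z = G((z-1)+1).\<close>
definition barnes_G :: "real \<Rightarrow> real" where
  "barnes_G z = (let w = z - 1 in
     (2 * pi) powr (w / 2) * exp (- (w + w\<^sup>2 * (1 + euler_mascheroni)) / 2) *
     (\<Prod>m. (1 + w / real (Suc m)) ^ (Suc m) * exp (- w + w\<^sup>2 / (2 * real (Suc m)))))"

end

theory Submission
  imports Defs "HOL-Real_Asymp.Real_Asymp" "HOL-Probability.Characteristic_Functions"
begin

text \<open>Pairing the terms with indices \<open>2m+1\<close> and \<open>2m+2\<close> turns the alternating series into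
  one whose \<open>m\<close>-th term is \<open>H(2m+1) - \<gamma> - ln(2m+x) + (x - 3/2)/(2m+2)\<close> minus twice the
  difference of the logarithms of the \<open>(m+1)\<close>-st Weierstrass factors of \<open>G((x+1)/2)\<close> and
  \<open>G(x/2)\<close>. The partial sums of the first four parts have a closed form in terms of harmonic
  numbers, \<open>ln N!\<close> and Gauss' approximants of \<open>ln \<Gamma>(x/2)\<close>; their limits follow from
  \<open>n (H(n) - ln n - \<gamma>) \<longrightarrow> 1/2\<close>, \<open>H(2n) - H(n) \<longrightarrow> ln 2\<close> and Stirling's constant
  \<open>ln(2\<pi>)/2\<close>, which is recovered from Wallis' product. As the terms tend to \<open>0\<close>, the limit
  of the even partial sums is the sum of the series.\<close>

lemma LIMSEQ_double_index: "X \<longlonglongrightarrow> L \<Longrightarrow> (\<lambda>n. X (2 * n)) \<longlonglongrightarrow> L"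
  by (rule filterlim_compose[OF _ mult_nat_left_at_top]) simp_all

lemma sums_if_even_partial_sums:
  fixes f :: "nat \<Rightarrow> 'a::real_normed_vector"
  assumes "f \<longlonglongrightarrow> 0" and "(\<lambda>n. \<Sum>k<2*n. f k) \<longlonglongrightarrow> s"
  shows "f sums s"
  unfolding sums_def
proof (rule limseq_even_odd)
  show "(\<lambda>n. \<Sum>k<2*n. f k) \<longlonglongrightarrow> s"
    by fact
  have "(\<lambda>n. (\<Sum>k<2*n. f k) + f (2*n)) \<longlonglongrightarrow> s + 0"
    by (intro tendsto_add assms(2) LIMSEQ_double_index assms(1))
  then show "(\<lambda>n. \<Sum>k<2*n+1. f k) \<longlonglongrightarrow> s"
    by simp
qed

section \<open>Harmonic numbers\<close>

lemma harm_minus_ln_asymp: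
  "(\<lambda>n. real n * (harm n - ln (real n) - euler_mascheroni)) \<longlonglongrightarrow> 1/2"
proof (rule LIMSEQ_offset[where k = 2])
  let ?d = "\<lambda>k. harm (k+2) - ln (real (k+2)) - euler_mascheroni"
  let ?lower = "\<lambda>k. 1 / real (k+2) - 1 / real (2*(k+1))"
  let ?upper = "\<lambda>k. 1 / real (k+2) - 1 / real (2*(k+2))"
  have "?lower k \<le> ?d k" "?d k \<le> ?upper k" for k
  proof -
    have "harm (k+2) = harm (Suc k) + 1 / real (k+2)"
      by (simp add: harm_Suc inverse_eq_divide)
    with euler_mascheroni_lower[of k] euler_mascheroni_upper[of k]
    show "?lower k \<le> ?d k" "?d k \<le> ?upper k"
      by simp_all
  qed
  then have "eventually (\<lambda>k. real (k+2) * ?lower k \<le> real (k+2) * ?d k) sequentially"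
    and "eventually (\<lambda>k. real (k+2) * ?d k \<le> real (k+2) * ?upper k) sequentially"
    by (simp_all add: always_eventually mult_left_mono)
  moreover have "(\<lambda>k. real (k+2) * ?lower k) \<longlonglongrightarrow> 1/2" "(\<lambda>k. real (k+2) * ?upper k) \<longlonglongrightarrow> 1/2"
    by real_asymp+
  ultimately show "(\<lambda>k. real (k+2) * ?d k) \<longlonglongrightarrow> 1/2"
    by (rule tendsto_sandwich)
qed

lemma harm_double_minus_harm: "(\<lambda>n. harm (2*n) - harm n) \<longlonglongrightarrow> (ln 2 :: real)"
proof -
  let ?f = "\<lambda>n. (harm (2*n) - ln (real (2*n))) - (harm n - ln (real n)) + (ln 2 :: real)"
  have "?f \<longlonglongrightarrow> euler_mascheroni - euler_mascheroni + ln 2"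
    by (intro tendsto_add tendsto_diff tendsto_const euler_mascheroni_LIMSEQ
          LIMSEQ_double_index[OF euler_mascheroni_LIMSEQ])
  then have "?f \<longlonglongrightarrow> ln 2"
    by simp
  moreover have "\<forall>\<^sub>F n in sequentially. ?f n = harm (2*n) - harm n"
    using eventually_gt_at_top[of 0] by eventually_elim (simp add: ln_mult)
  ultimately show ?thesis
    by (rule Lim_transform_eventually)
qed

lemma sum_harm_odd:
  "(\<Sum>m<N. harm (2*m+1) :: real) = (real N + 1/2) * harm (2*N) - real N - harm N / 4"
proof (induction N)
  case (Suc N)
  have odd: "harm (2*N+1) = harm (2*N) + 1 / (2 * real N + 1)"
    and even: "harm (2 * Suc N) = harm (2*N) + 1 / (2 * real N + 1) + 1 / (2 * real N + 2)"
    and "harm (Suc N) = harm N + 1 / (real N + 1)"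
    by (simp_all add: harm_Suc inverse_eq_divide add_ac)
  have "(\<Sum>m<Suc N. harm (2*m+1)) =
      (real N + 1/2) * harm (2*N) - real N - harm N / 4 + (harm (2*N+1) :: real)"
    using Suc.IH by simp
  also have "\<dots> = (real (Suc N) + 1/2) * harm (2 * Suc N) - real (Suc N) - harm (Suc N) / 4"
  proof -
    have "(r + 1/2) * a - r - b/4 + (a + 1/(2*r+1)) =
        (r + 1 + 1/2) * (a + 1/(2*r+1) + 1/(2*r+2)) - (r+1) - (b + 1/(r+1))/4"
      if "r \<ge> 0" for r a b :: real
      using that by (simp add: divide_simps) (simp add: algebra_simps)
    then show ?thesis
      unfolding odd even \<open>harm (Suc N) = _\<close> by simp
  qed
  finally show ?case .
qed (simp add: harm_def)

section \<open>Stirling's constant\<close>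

definition stirling_remainder :: "nat \<Rightarrow> real" where
  "stirling_remainder n = ln (fact n) - (real n + 1/2) * ln (real n) + real n"

lemma stirling_remainder_diff_bounds:
  assumes "n > 0"
  shows "0 \<le> stirling_remainder n - stirling_remainder (Suc n)"
    and "stirling_remainder n - stirling_remainder (Suc n) \<le> 1 / (4 * real n) - 1 / (4 * real (Suc n))"
proof -
  let ?D = "stirling_remainder n - stirling_remainder (Suc n)"
  have n: "real n > 0"
    using assms by simp
  have "ln (fact (Suc n)) = ln (real n + 1) + ln (fact n :: real)"
    by (simp add: ln_mult add.commute)
  then have D: "?D = (real n + 1/2) * (ln (real n + 1) - ln (real n)) - 1"
    by (simp add: stirling_remainder_def algebra_simps)
  have "2 / (2 * real n + 1) \<le> ln (real n + 1) - ln (real n)"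
    using ln_inverse_approx_ge[of "real n" "real n + 1"] n by (simp add: algebra_simps)
  from mult_left_mono[OF this, of "real n + 1/2"] show "0 \<le> ?D"
    unfolding D using n by (simp add: field_simps)
  have "ln (real n + 1) - ln (real n) \<le> (1 / real n + 1 / (real n + 1)) / 2"
    using ln_inverse_approx_le[of "real n" 1] n by (simp add: inverse_eq_divide)
  from mult_left_mono[OF this, of "real n + 1/2"]
  have "?D \<le> (real n + 1/2) * ((1 / real n + 1 / (real n + 1)) / 2) - 1"
    unfolding D by simp
  also have "\<dots> = 1 / (4 * real n) - 1 / (4 * real (Suc n))"
    using n by (simp add: divide_simps) (simp add: algebra_simps)
  finally show "?D \<le> 1 / (4 * real n) - 1 / (4 * real (Suc n))" .
qed

lemma convergent_stirling_remainder: "convergent stirling_remainder"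
proof -
  have telescoped:
    "stirling_remainder 1 - 1/4 \<le> stirling_remainder (Suc n) - 1 / (4 * real (Suc n))" for n
  proof (induction n)
    case (Suc n)
    with stirling_remainder_diff_bounds(2)[of "Suc n"] show ?case
      by simp
  qed simp
  have "stirling_remainder 1 - 1/4 \<le> stirling_remainder (Suc n)" for n
    by (rule order_trans[OF telescoped[of n]]) simp
  moreover have "decseq (\<lambda>n. stirling_remainder (Suc n))"
    by (rule decseq_SucI) (use stirling_remainder_diff_bounds(1) in force)
  ultimately obtain C where "(\<lambda>n. stirling_remainder (Suc n)) \<longlonglongrightarrow> C"
    by (blast elim: decseq_convergent)
  then show ?thesis
    by (auto simp: convergent_def filterlim_sequentially_Suc)
qed

lemma wallis_partial_product:
  "(\<Prod>k=1..n. (4 * real k^2) / (4 * real k^2 - 1)) =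
     16^n * (fact n)^4 / ((fact (2*n))^2 * (2 * real n + 1))"
proof (induction n)
  case (Suc n)
  have step: "a * F^4 / (G^2 * (2*r+1)) * (4*(r+1)^2 / ((2*r+1) * (2*r+3))) =
      16 * a * ((r+1) * F)^4 / (((2*r+2) * (2*r+1) * G)^2 * (2*r+3))"
    if "r \<ge> 0" "G > 0" for r a F G :: real
    using that by (simp add: divide_simps) algebra
  have "(4 * real (Suc n)^2) / (4 * real (Suc n)^2 - 1) =
      4 * (real n + 1)^2 / ((2 * real n + 1) * (2 * real n + 3))"
    by (simp add: algebra_simps power2_eq_square)
  then have "(\<Prod>k=1..Suc n. (4 * real k^2) / (4 * real k^2 - 1)) =
      16^n * (fact n)^4 / ((fact (2*n))^2 * (2 * real n + 1)) *
      (4 * (real n + 1)^2 / ((2 * real n + 1) * (2 * real n + 3)))"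
    using Suc.IH by simp
  also have "(fact (2 * Suc n) :: real) = (2 * real n + 2) * (2 * real n + 1) * fact (2*n)"
    by (simp add: algebra_simps)
  then have "16^n * (fact n)^4 / ((fact (2*n))^2 * (2 * real n + 1)) *
      (4 * (real n + 1)^2 / ((2 * real n + 1) * (2 * real n + 3))) =
      16^Suc n * (fact (Suc n))^4 / ((fact (2 * Suc n))^2 * (2 * real (Suc n) + 1))"
    using step[of "real n" "fact (2*n)" "16^n" "fact n"] by (simp add: algebra_simps)
  finally show ?case .
qed simp

lemma stirling_remainder_LIMSEQ: "stirling_remainder \<longlonglongrightarrow> ln (2 * pi) / 2"
proof -
  let ?W = "\<lambda>n. \<Prod>k=1..n. (4 * real k^2) / (4 * real k^2 - 1)"
  obtain C where C: "stirling_remainder \<longlonglongrightarrow> C"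
    using convergent_stirling_remainder by (auto simp: convergent_def)
  with LIMSEQ_double_index[OF C]
  have lim_C: "(\<lambda>n. 4 * stirling_remainder n - 2 * stirling_remainder (2*n)) \<longlonglongrightarrow> 4 * C - 2 * C"
    by (intro tendsto_intros)
  have lim_wallis: "(\<lambda>n. ln (?W n) + ln 2 + ln (2 + 1 / real n)) \<longlonglongrightarrow> ln (pi / 2) + ln 2 + ln 2"
  proof (intro tendsto_add tendsto_const)
    show "(\<lambda>n. ln (?W n)) \<longlonglongrightarrow> ln (pi / 2)"
      by (rule tendsto_ln[OF wallis]) simp
    show "(\<lambda>n. ln (2 + 1 / real n)) \<longlonglongrightarrow> ln 2"
      by real_asymp
  qed
  have "\<forall>\<^sub>F n in sequentially.
      ln (?W n) + ln 2 + ln (2 + 1 / real n) = 4 * stirling_remainder n - 2 * stirling_remainder (2*n)"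
    using eventually_gt_at_top[of 0]
  proof eventually_elim
    case (elim n)
    have "2 + 1 / real n = (2 * real n + 1) / real n"
      using elim by (simp add: field_simps)
    then have "ln (2 + 1 / real n) = ln (2 * real n + 1) - ln (real n)"
      using elim by (simp add: ln_div)
    moreover have "ln (16^n :: real) = 4 * real n * ln 2"
      using ln_realpow[of 2 "4*n"] by (simp add: power_mult)
    moreover have "ln (?W n) = ln (16^n) + 4 * ln (fact n) - 2 * ln (fact (2*n)) - ln (2 * real n + 1)"
      unfolding wallis_partial_product by (simp add: ln_mult ln_div ln_realpow)
    ultimately show ?case
      using elim by (simp add: stirling_remainder_def ln_mult algebra_simps)
  qed
  from lim_C Lim_transform_eventually[OF lim_wallis this]
  have "4 * C - 2 * C = ln (pi / 2) + ln 2 + ln 2"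
    by (rule LIMSEQ_unique)
  then have "C = ln (2 * pi) / 2"
    by (simp add: ln_div ln_mult)
  with C show ?thesis
    by simp
qed

lemma ln_Gamma_series_eq_sum_ln:
  fixes z :: real
  assumes "z > 0"
  shows "ln_Gamma_series z N =
    z * ln (real N) + ln (fact N) - ln (z + real N) - (\<Sum>m<N. ln (z + real m))"
proof (induction N)
  case (Suc N)
  have "ln (z / real (Suc N) + 1) = ln (z + real (Suc N)) - ln (real (Suc N))"
    using assms by (simp add: ln_div field_simps flip: of_nat_Suc)
  moreover have "ln (fact (Suc N)) = ln (real (Suc N)) + ln (fact N :: real)"
    by (simp add: ln_mult flip: of_nat_Suc)
  moreover have "ln_Gamma_series z (Suc N) =
      ln_Gamma_series z N - z * ln (real N) + z * ln (real (Suc N)) - ln (z / real (Suc N) + 1)"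
    by (simp add: ln_Gamma_series_def algebra_simps)
  ultimately show ?case
    using Suc.IH by (simp add: algebra_simps)
qed (simp add: ln_Gamma_series_def)

section \<open>The Weierstrass factors of the Barnes G-function\<close>

lemma abs_ln_one_plus_x_second_order_bound:
  fixes t :: real
  assumes "t \<ge> -1/2"
  shows "\<bar>ln (1 + t) - t + t^2/2\<bar> \<le> 2 * \<bar>t\<bar>^3"
proof -
  let ?S = "{min 0 t..max 0 t}"
  have "norm ((ln (1 + t) - t + t^2/2) - (ln (1 + 0) - 0 + 0^2/2)) \<le> 2 * t^2 * norm (t - 0)"
  proof (rule field_differentiable_bound[of ?S])
    fix s assume "s \<in> ?S"
    then have s: "1/2 \<le> 1 + s" "\<bar>s\<bar> \<le> \<bar>t\<bar>"
      using assms by auto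
    show "((\<lambda>s. ln (1 + s) - s + s^2/2) has_field_derivative s^2 / (1 + s)) (at s within ?S)"
      using s(1) by (auto intro!: derivative_eq_intros simp: field_simps power2_eq_square)
    have "s^2 / (1 + s) \<le> s^2 / (1/2)"
      using s(1) by (intro divide_left_mono) auto
    also have "\<dots> \<le> 2 * t^2"
      using s(2) by (simp add: abs_le_square_iff)
    finally show "norm (s^2 / (1 + s)) \<le> 2 * t^2"
      using s(1) by simp
  qed auto
  also have "2 * t^2 * norm (t - 0) = 2 * \<bar>t\<bar>^3"
    by (simp add: power3_eq_cube power2_eq_square)
  finally show ?thesis
    by simp
qed

definition ln_barnes_factor :: "real \<Rightarrow> nat \<Rightarrow> real" where
  "ln_barnes_factor w k =
     real (Suc k) * ln (1 + w / real (Suc k)) - w + w^2 / (2 * real (Suc k))"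

lemma abs_ln_barnes_factor_le:
  assumes "2 * \<bar>w\<bar> \<le> real (Suc k)"
  shows "\<bar>ln_barnes_factor w k\<bar> \<le> 2 * \<bar>w\<bar>^3 / real (Suc k)^2"
proof -
  define m where "m = real (Suc k)"
  have m: "m > 0" "\<bar>w / m\<bar> \<le> 1/2"
    using assms by (auto simp: m_def abs_div field_simps)
  have "ln_barnes_factor w k = m * (ln (1 + w / m) - w / m + (w / m)^2 / 2)"
    unfolding ln_barnes_factor_def m_def[symmetric]
    using m by (simp add: field_simps power2_eq_square)
  then have "\<bar>ln_barnes_factor w k\<bar> = m * \<bar>ln (1 + w / m) - w / m + (w / m)^2 / 2\<bar>"
    using m by (simp add: abs_mult)
  also have "\<dots> \<le> m * (2 * \<bar>w / m\<bar>^3)"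
  proof (rule mult_left_mono[OF abs_ln_one_plus_x_second_order_bound])
    show "-1/2 \<le> w / m"
      using m(2) by (simp only: abs_le_iff) linarith
  qed (use m in simp)
  also have "\<dots> = 2 * \<bar>w\<bar>^3 / m^2"
    using m by (simp add: abs_div power_divide power2_eq_square power3_eq_cube)
  finally show ?thesis
    unfolding m_def .
qed

lemma summable_ln_barnes_factor: "summable (ln_barnes_factor w)"
proof (rule summable_comparison_test_ev)
  have "summable (\<lambda>k. 1 / real (Suc k)^2)"
    using inverse_squares_sums by (auto simp: sums_iff)
  then have "summable (\<lambda>k. 2 * \<bar>w\<bar>^3 * (1 / real (Suc k)^2))"
    by (rule summable_mult)
  then show "summable (\<lambda>k. 2 * \<bar>w\<bar>^3 / real (Suc k)^2)"
    by simp
  obtain N :: nat where N: "2 * \<bar>w\<bar> \<le> real N"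
    using real_arch_simple by blast
  show "\<forall>\<^sub>F k in sequentially. norm (ln_barnes_factor w k) \<le> 2 * \<bar>w\<bar>^3 / real (Suc k)^2"
    using eventually_ge_at_top[of N]
  proof eventually_elim
    case (elim k)
    with N have "2 * \<bar>w\<bar> \<le> real (Suc k)"
      by linarith
    then show ?case
      using abs_ln_barnes_factor_le by simp
  qed
qed

lemma ln_barnes_G:
  assumes "z > 0"
  shows "barnes_G z > 0"
    and "ln (barnes_G z) = (z - 1) / 2 * ln (2 * pi)
           - ((z - 1) + (z - 1)^2 * (1 + euler_mascheroni)) / 2 + suminf (ln_barnes_factor (z - 1))"
proof -
  define w where "w = z - 1"
  have factor: "(1 + w / real (Suc m)) ^ Suc m * exp (- w + w^2 / (2 * real (Suc m))) =
      exp (ln_barnes_factor w m)" for m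
  proof -
    have "1 + w / real (Suc m) > 0"
      using assms by (simp add: w_def field_simps)
    then have "exp (real (Suc m) * ln (1 + w / real (Suc m))) = (1 + w / real (Suc m)) ^ Suc m"
      by (simp only: exp_of_nat_mult exp_ln)
    moreover have "exp (ln_barnes_factor w m) =
        exp (real (Suc m) * ln (1 + w / real (Suc m))) * exp (- w + w^2 / (2 * real (Suc m)))"
      unfolding ln_barnes_factor_def by (subst exp_add[symmetric]) (simp add: algebra_simps)
    ultimately show ?thesis
      by simp
  qed
  have G: "barnes_G z = (2 * pi) powr (w / 2) * exp (- (w + w^2 * (1 + euler_mascheroni)) / 2) *
      exp (suminf (ln_barnes_factor w))"
    unfolding barnes_G_def Let_def w_def[symmetric] factor
      prodinf_exp[OF summable_ln_barnes_factor] ..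
  show "barnes_G z > 0"
    unfolding G by simp
  show "ln (barnes_G z) = (z - 1) / 2 * ln (2 * pi)
      - ((z - 1) + (z - 1)^2 * (1 + euler_mascheroni)) / 2 + suminf (ln_barnes_factor (z - 1))"
    unfolding G w_def[symmetric] by (simp add: ln_mult ln_powr) (simp add: field_simps)
qed

lemma ln_barnes_G_ratio:
  assumes "x > 0"
  shows "ln (barnes_G ((x+1)/2) / barnes_G (x/2)) =
    ln (2 * pi) / 4 - 1/4 - (x - 3/2) * (1 + euler_mascheroni) / 4
    + (suminf (ln_barnes_factor ((x+1)/2 - 1)) - suminf (ln_barnes_factor (x/2 - 1)))"
  using ln_barnes_G[of "(x+1)/2"] ln_barnes_G[of "x/2"] assms
  by (simp add: ln_div field_simps power2_eq_square)

lemma ln_barnes_factor_half_eq: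
  assumes "2 * real m + c > 0"
  shows "ln_barnes_factor (c/2 - 1) m =
    (real m + 1) * (ln (2 * real m + c) - ln (2 * real m + 2))
      - (c/2 - 1) + (c/2 - 1)^2 / (2 * (real m + 1))"
proof -
  have eq: "1 + (c/2 - 1) / real (Suc m) = (2 * real m + c) / (2 * real m + 2)"
    by (simp add: field_simps)
  have "2 * real m + c \<noteq> 0"
    using assms by linarith
  then show ?thesis
    unfolding ln_barnes_factor_def eq by (simp add: ln_div add_ac)
qed

section \<open>Pairing the terms of the series\<close>

definition alt_term :: "real \<Rightarrow> nat \<Rightarrow> real" where
  "alt_term x n = (-1) ^ n * real n *
     (harm n - ln (real n + x - 1) - euler_mascheroni + x / real n - 3 / (2 * real n))"

lemma alt_term_eq:
  assumes "n > 0"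
  shows "alt_term x n =
    (-1) ^ n * (real n * (harm n - ln (real n + x - 1) - euler_mascheroni) + x - 3/2)"
  using assms by (simp add: alt_term_def field_simps)

lemma alt_term_pair:
  assumes "x > 0"
  shows "alt_term x (2*m+1) + alt_term x (2*m+2) =
     harm (2*m+1) - euler_mascheroni - ln (2 * real m + x) + (x - 3/2) / (2 * (real m + 1))
     - 2 * (ln_barnes_factor ((x+1)/2 - 1) m - ln_barnes_factor (x/2 - 1) m)"
proof -
  define r where "r = real m"
  have odd: "alt_term x (2*m+1) =
      - ((2*r+1) * (harm (2*m+1) - ln (2*r+x) - euler_mascheroni) + x - 3/2)"
    using alt_term_eq[of "2*m+1" x] by (simp add: r_def)
  have even: "alt_term x (2*m+2) =
      (2*r+2) * (harm (2*m+1) + 1 / (2*r+2) - ln (2*r+x+1) - euler_mascheroni) + x - 3/2"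
    using alt_term_eq[of "2*m+2" x] harm_Suc[of "2*m+1"]
    by (simp add: r_def inverse_eq_divide add_ac)
  \<comment> \<open>the factors supply exactly the logarithms weighted by \<open>2m+2\<close> in the pair\<close>
  have factor_odd: "ln_barnes_factor ((x+1)/2 - 1) m =
      (r+1) * (ln (2*r+x+1) - ln (2*r+2)) - ((x+1)/2 - 1) + ((x+1)/2 - 1)^2 / (2*(r+1))"
    using ln_barnes_factor_half_eq[of m "x+1"] assms by (simp add: r_def add_ac)
  have factor_even: "ln_barnes_factor (x/2 - 1) m =
      (r+1) * (ln (2*r+x) - ln (2*r+2)) - (x/2 - 1) + (x/2 - 1)^2 / (2*(r+1))"
    using ln_barnes_factor_half_eq[of m x] assms by (simp add: r_def)
  have "r \<ge> 0"
    by (simp add: r_def)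
  then show ?thesis
    unfolding odd even factor_odd factor_even r_def[symmetric]
    by (simp add: divide_simps) (simp add: algebra_simps power2_eq_square)
qed

lemma sum_alt_term_even:
  assumes "x > 0" "N > 0"
  shows "(\<Sum>k<2*N. alt_term x (Suc k)) =
      real (2*N) * (harm (2*N) - ln (real (2*N)) - euler_mascheroni) / 2 + (harm (2*N) - harm N) / 2
      - stirling_remainder N + (ln (x/2 + real N) - ln (real N))
      + (x - 1) / 2 * (harm N - ln (real N)) + ln_Gamma_series (x/2) N
      - 2 * (\<Sum>m<N. ln_barnes_factor ((x+1)/2 - 1) m - ln_barnes_factor (x/2 - 1) m)"
proof -
  have "(\<Sum>k<2*N. alt_term x (Suc k)) = (\<Sum>m<N. alt_term x (2*m+1) + alt_term x (2*m+2))"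
    by (induction N) (simp_all add: add_ac)
  also have "\<dots> = (\<Sum>m<N. harm (2*m+1)) - real N * euler_mascheroni - (\<Sum>m<N. ln (2 * real m + x))
      + (\<Sum>m<N. (x - 3/2) / (2 * (real m + 1)))
      - 2 * (\<Sum>m<N. ln_barnes_factor ((x+1)/2 - 1) m - ln_barnes_factor (x/2 - 1) m)"
    unfolding alt_term_pair[OF assms(1)] by (simp add: sum.distrib sum_subtractf sum_distrib_left)
  also have "(\<Sum>m<N. (x - 3/2) / (2 * (real m + 1))) = (x - 3/2) / 2 * harm N"
    by (simp add: harm_altdef sum_distrib_left inverse_eq_divide add_ac)
  also have "(\<Sum>m<N. ln (2 * real m + x)) = real N * ln 2 + (\<Sum>m<N. ln (x/2 + real m))"
  proof -
    have "ln (2 * real m + x) = ln 2 + ln (x/2 + real m)" for m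
    proof -
      have "x/2 + real m > 0"
        using assms(1) by (simp add: add_pos_nonneg)
      from ln_mult_pos[OF _ this, of 2] show ?thesis
        by (simp add: algebra_simps)
    qed
    then show ?thesis
      by (simp add: sum.distrib)
  qed
  also have "(\<Sum>m<N. ln (x/2 + real m)) =
      x/2 * ln (real N) + ln (fact N) - ln (x/2 + real N) - ln_Gamma_series (x/2) N"
    using ln_Gamma_series_eq_sum_ln[of "x/2" N] assms(1) by simp
  also have "(\<Sum>m<N. harm (2*m+1)) = (real N + 1/2) * harm (2*N) - real N - harm N / 4"
    by (rule sum_harm_odd)
  finally show ?thesis
    using assms(2) by (simp add: stirling_remainder_def ln_mult field_simps)
qed

lemma sum_alt_term_even_LIMSEQ:
  assumes "x > 0"
  shows "(\<lambda>N. \<Sum>k<2*N. alt_term x (Suc k)) \<longlonglongrightarrow>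
     1/4 + ln 2 / 2 - ln (2 * pi) / 2 + (x - 1) / 2 * euler_mascheroni + ln_Gamma (x/2)
     - 2 * (suminf (ln_barnes_factor ((x+1)/2 - 1)) - suminf (ln_barnes_factor (x/2 - 1)))"
proof -
  let ?closed = "\<lambda>N. real (2*N) * (harm (2*N) - ln (real (2*N)) - euler_mascheroni) / 2
      + (harm (2*N) - harm N) / 2 - stirling_remainder N + (ln (x/2 + real N) - ln (real N))
      + (x - 1) / 2 * (harm N - ln (real N)) + ln_Gamma_series (x/2) N
      - 2 * (\<Sum>m<N. ln_barnes_factor ((x+1)/2 - 1) m - ln_barnes_factor (x/2 - 1) m)"
  have "(\<lambda>N. real (2*N) * (harm (2*N) - ln (real (2*N)) - euler_mascheroni)) \<longlonglongrightarrow> 1/2"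
    by (rule LIMSEQ_double_index[OF harm_minus_ln_asymp])
  moreover have "(\<lambda>N. ln (x/2 + real N) - ln (real N)) \<longlonglongrightarrow> 0"
    by real_asymp
  moreover have "(\<lambda>N. \<Sum>m<N. ln_barnes_factor ((x+1)/2 - 1) m - ln_barnes_factor (x/2 - 1) m)
      \<longlonglongrightarrow> suminf (ln_barnes_factor ((x+1)/2 - 1)) - suminf (ln_barnes_factor (x/2 - 1))"
    unfolding sum_subtractf by (intro tendsto_diff summable_LIMSEQ summable_ln_barnes_factor)
  moreover have "ln_Gamma_series (x/2) \<longlonglongrightarrow> ln_Gamma (x/2)"
    using assms by (intro ln_Gamma_real_LIMSEQ) simp
  ultimately have lim: "?closed \<longlonglongrightarrow>
      1/2 / 2 + ln 2 / 2 - ln (2 * pi) / 2 + 0 + (x - 1) / 2 * euler_mascheroni + ln_Gamma (x/2)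
      - 2 * (suminf (ln_barnes_factor ((x+1)/2 - 1)) - suminf (ln_barnes_factor (x/2 - 1)))"
    by (intro tendsto_add tendsto_diff tendsto_divide tendsto_mult_left tendsto_const
          harm_double_minus_harm stirling_remainder_LIMSEQ euler_mascheroni_LIMSEQ) simp_all
  have "\<forall>\<^sub>F N in sequentially. ?closed N = (\<Sum>k<2*N. alt_term x (Suc k))"
    using eventually_gt_at_top[of 0] by eventually_elim (simp add: sum_alt_term_even[OF assms])
  from Lim_transform_eventually[OF lim this] show ?thesis
    by simp
qed

lemma alt_term_LIMSEQ_0:
  assumes "x > 0"
  shows "alt_term x \<longlonglongrightarrow> 0"
proof -
  define b where "b n = real n * (harm n - ln (real n + x - 1) - euler_mascheroni) + x - 3/2" for n
  have "(\<lambda>n. real n * (ln (real n + x - 1) - ln (real n))) \<longlonglongrightarrow> x - 1"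
    by real_asymp
  then have "(\<lambda>n. real n * (harm n - ln (real n) - euler_mascheroni)
      - real n * (ln (real n + x - 1) - ln (real n)) + x - 3/2) \<longlonglongrightarrow> 1/2 - (x - 1) + x - 3/2"
    by (intro tendsto_add tendsto_diff harm_minus_ln_asymp tendsto_const)
  then have "b \<longlonglongrightarrow> 0"
    by (simp add: b_def[abs_def] algebra_simps)
  then have "(\<lambda>n. \<bar>b n\<bar>) \<longlonglongrightarrow> 0"
    by (simp add: tendsto_rabs_zero_iff)
  moreover have "\<forall>\<^sub>F n in sequentially. \<bar>b n\<bar> = \<bar>alt_term x n\<bar>"
    using eventually_gt_at_top[of 0] by eventually_elim (simp add: alt_term_eq b_def abs_mult)
  ultimately have "(\<lambda>n. \<bar>alt_term x n\<bar>) \<longlonglongrightarrow> 0"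
    by (rule Lim_transform_eventually)
  then show ?thesis
    by (simp add: tendsto_rabs_zero_iff)
qed

theorem mainTheorem14:
  fixes x :: real
  assumes "x > 0"
  shows "(\<lambda>k. let n = Suc k in (-1) ^ n * real n *
            (harm n - ln (real n + x - 1) - euler_mascheroni + x / real n - 3 / (2 * real n)))
         sums (euler_mascheroni / 4 - (x - ln 2 - 1) / 2
               - 2 * ln (barnes_G ((x + 1) / 2) / barnes_G (x / 2)) + ln (Gamma (x / 2)))"
proof -
  have "(\<lambda>k. alt_term x (Suc k)) sums
      (1/4 + ln 2 / 2 - ln (2 * pi) / 2 + (x - 1) / 2 * euler_mascheroni + ln_Gamma (x/2)
       - 2 * (suminf (ln_barnes_factor ((x+1)/2 - 1)) - suminf (ln_barnes_factor (x/2 - 1))))"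
    (is "_ sums ?L")
    using LIMSEQ_Suc[OF alt_term_LIMSEQ_0[OF assms]] sum_alt_term_even_LIMSEQ[OF assms]
    by (rule sums_if_even_partial_sums)
  also have "?L = euler_mascheroni / 4 - (x - ln 2 - 1) / 2
      - 2 * ln (barnes_G ((x + 1) / 2) / barnes_G (x / 2)) + ln (Gamma (x / 2))"
    using ln_barnes_G_ratio[OF assms] ln_Gamma_real_pos[of "x/2"] assms
    by (simp add: field_simps)
  finally show ?thesis
    by (simp only: alt_term_def Let_def)
qed

end
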